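(* Fix $\alpha\in\mathcal A$ and a constant $c>0$. Assume that there exists a nondegenerate $m\times m$ matrix $A_c^*(\alpha)$ solving, with respect to the matrix $A$, the equation $$\int_0^t \psi_c^A(s,Y^0(\alpha);\alpha)\,[\dot a(s,Y^0(\alpha);\alpha)]'\,ds=\mathrm{Id},$$ where $\psi_c^A:=h_c(A\dot a)$. Then $\psi_c^*:=\psi_c^{A_c^*(\alpha)}=h_c(A_c^*(\alpha)\dot a)$ solves the following optimization problem: minimize $$\operatorname{tr}\int_0^t \psi(s,Y^0(\alpha);\alpha)[\psi(s,Y^0(\alpha);\alpha)]'\,ds$$ over $\psi\in\Psi_{0,c}$, i.e. over $\psi\in\Psi_0$ subject to the side conditions $\int_0^t \psi(s,Y^0(\alpha);\alpha)[\dot a(s,Y^0(\alpha);\alpha)]'ds=\mathrm{Id}$ and $\sup_{0\le s\le t}|\psi(s,Y^0(\alpha);\alpha)|\le c$. That is, $\psi_c^*$ satisfies both side conditions, and for every such $\psi$ the trace of $\int_0^t\psi_c^*(\psi_c^* )'ds$ (along $Y^0(\alpha)$) is at most that of $\int_0^t\psi\psi'ds$.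
   Context: Fix $t>0$ and an open set $\mathcal A\subset\mathbb R^m$, $m\ge1$. Let $C_t$ be the space of continuous functions $x=(x_s)_{0\le s\le t}$ with $\mathcal B_s=\sigma(x_u,u\le s)$. Let $a:[0,t]\times C_t\times\mathcal A\to\mathbb R$ be nonanticipative (i.e. $a(s,\cdot;\alpha)$ is $\mathcal B_s$-measurable), satisfying for constants $L_1,L_2$ independent of $\alpha$ and a nondecreasing right-continuous $k$ with $0\le k(s)\le k_0<\infty$: $|a(s,x^1;\alpha)-a(s,x^2;\alpha)|\le L_1\int_0^s|x^1_u-x^2_u|dk_u+L_2|x^1_s-x^2_s|$ and $|a(s,x;\alpha)|\le L_1\int_0^s(1+|x_u|)dk_u+L_2(1+|x_s|)$; assume $a$ is differentiable in $\alpha$ with gradient $\dot a=(\partial a/\partial\alpha_1,\dots,\partial a/\partial\alpha_m)'$. $Y^0(\alpha)$ denotes the solution of $dY_s=a(s,Y;\alpha)ds$, $Y_0=0$. For $\varepsilon>0$, $P^\varepsilon_\alpha$ is the law on $C_t$ of the solution of $dX_s=a_\varepsilon(s,X;\alpha)ds+dw_s$, $X_0=0$, where $a_\varepsilon(s,x;\alpha)=\varepsilon^{-1}a(s,\varepsilon x;\alpha)$ and $w$ is a Wiener process; $X$ is the coordinate process. The class $\Psi$ consists of nonanticipative $\psi:[0,t]\times C_t\times\mathcal A\to\mathbb R^m$ such that for each $\alpha$ and $\varepsilon>0$: $E^\varepsilon_\alpha\int_0^t|\psi(s,X;\alpha)|^2ds<\infty$; $\int_0^t|\psi(s,Y^0(\alpha);\alpha)|^2ds<\infty$;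 and, uniformly in $\alpha$ on compacts, $\int_0^t|\psi(s,\varepsilon X;\alpha)-\psi(s,Y^0(\alpha);\alpha)|^2ds\to0$ in $P^\varepsilon_\alpha$-probability as $\varepsilon\to0$. $\Psi_0\subset\Psi$ consists of $\psi$ with $\operatorname{rank}\Gamma_0^\psi(\alpha)=\operatorname{rank}\gamma_0^\psi(\alpha)=m$ for all $\alpha$, where $\Gamma_0^\psi(\alpha)=\int_0^t\psi(s,Y^0(\alpha);\alpha)\psi(s,Y^0(\alpha);\alpha)'ds$ and $\gamma_0^\psi(\alpha)=\int_0^t\psi(s,Y^0(\alpha);\alpha)\dot a(s,Y^0(\alpha);\alpha)'ds$. It is assumed that $\dot a\in\Psi_0$. The Huber function is $h_c(z)=z\min(1,c/|z|)$ for $z\in\mathbb R^m$, $|\cdot|$ the Euclidean norm; $'$ denotes transposition. *)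

theory Defs
  imports "HOL-Analysis.Analysis"
begin

text \<open>Paths in C_t are modelled as functions real => real that are continuous on {0..t}.
Vectors in R^m are real^'m, m x m matrices are real^'m^'m.\<close>

definition huber :: "real \<Rightarrow> real^'m \<Rightarrow> real^'m" where
  "huber c z = min 1 (c / norm z) *\<^sub>R z"

definition outer :: "real^'m \<Rightarrow> real^'m \<Rightarrow> real^'m^'m" where
  "outer v w = (\<chi> i j. v $ i * w $ j)"

text \<open>Nonanticipative functional on [0,t] x C_t x A: the value at time s depends on the
path only through its restriction to [0,s] (B_s-measurability).\<close>
definition nonanticipative :: "real \<Rightarrow> (real \<Rightarrow> (real \<Rightarrow> real) \<Rightarrow> 'p \<Rightarrow> 'b) \<Rightarrow> bool" where
  "nonanticipative t f \<longleftrightarrow>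
     (\<forall>s\<in>{0..t}. \<forall>x1 x2 p. (\<forall>u\<in>{0..s}. x1 u = x2 u) \<longrightarrow> f s x1 p = f s x2 p)"

text \<open>Square integrability of a vector function on [0,t] (deterministic part of the class Psi).\<close>
definition sq_integrable_on :: "(real \<Rightarrow> real^'m) \<Rightarrow> real \<Rightarrow> bool" where
  "sq_integrable_on g t \<longleftrightarrow> g measurable_on {0..t} \<and> (\<lambda>s. (norm (g s))\<^sup>2) integrable_on {0..t}"

definition Gamma0 :: "real \<Rightarrow> (real \<Rightarrow> (real \<Rightarrow> real) \<Rightarrow> 'p \<Rightarrow> real^'m) \<Rightarrow> (real \<Rightarrow> real) \<Rightarrow> 'p \<Rightarrow> real^'m^'m" where
  "Gamma0 t psi y p = integral {0..t} (\<lambda>s. outer (psi s y p) (psi s y p))"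

definition gamma0 :: "real \<Rightarrow> (real \<Rightarrow> (real \<Rightarrow> real) \<Rightarrow> 'p \<Rightarrow> real^'m)
     \<Rightarrow> (real \<Rightarrow> (real \<Rightarrow> real) \<Rightarrow> 'p \<Rightarrow> real^'m) \<Rightarrow> (real \<Rightarrow> real) \<Rightarrow> 'p \<Rightarrow> real^'m^'m" where
  "gamma0 t psi adot y p = integral {0..t} (\<lambda>s. outer (psi s y p) (adot s y p))"

end

theory Submission
  imports Defs
begin

text \<open>
  The Huber map \<open>h\<^sub>c\<close> is the metric projection onto the closed ball of radius \<open>c\<close>, so for
  \<open>|v| \<le> c\<close> the projection inequality \<open>(z - h\<^sub>c z)\<cdot>(v - h\<^sub>c z) \<le> 0\<close> rearranges to
  \<open>2 z\<cdot>(v - h\<^sub>c z) \<le> |v|\<^sup>2 - |h\<^sub>c z|\<^sup>2\<close>. Take \<open>z = A\<^sup>* \<dot>a\<close> and \<open>v = \<psi>\<close>, both along \<open>Y\<^sup>0(\<alpha>)\<close>.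
  The left side integrates to the Frobenius pairing of \<open>A\<^sup>*\<close> with
  \<open>\<integral>\<psi>\<dot>a' - \<integral>\<psi>\<^sub>c\<^sup>*\<dot>a' = Id - Id = 0\<close>, and the right side to
  \<open>tr \<integral>\<psi>\<psi>' - tr \<integral>\<psi>\<^sub>c\<^sup>*\<psi>\<^sub>c\<^sup>*'\<close>.
\<close>

lemma huber_norm_le:
  assumes "0 \<le> c" shows "norm (huber c z) \<le> c"
proof (cases "z = 0")
  case False
  have "norm (huber c z) = min 1 (c / norm z) * norm z"
    using assms by (simp add: huber_def)
  also have "\<dots> \<le> c / norm z * norm z" by (intro mult_right_mono) auto
  finally show ?thesis using False by simp
qed (simp add: huber_def assms)

lemma huber_eq_self:
  assumes "norm z \<le> c" shows "huber c z = z"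
  using assms by (cases "z = 0") (auto simp: huber_def min_def field_simps)

lemma huber_eq_scaleR:
  assumes "c < norm z" "0 \<le> c" shows "huber c z = (c / norm z) *\<^sub>R z"
proof -
  have "c / norm z < 1" using assms by (simp add: divide_less_eq)
  then show ?thesis by (simp add: huber_def min_def)
qed

lemma huber_projection_ineq:
  fixes v z :: "real^'m"
  assumes "norm v \<le> c"
  shows "(z - huber c z) \<bullet> (v - huber c z) \<le> 0"
proof (cases "norm z \<le> c")
  case True
  then show ?thesis by (simp add: huber_eq_self)
next
  case False
  let ?r = "c / norm z"
  have c: "0 \<le> c" using assms norm_ge_zero order_trans by blast
  have z: "0 < norm z" "c < norm z" using False c by auto
  have h: "huber c z = ?r *\<^sub>R z" using z c by (simp add: huber_eq_scaleR)
  have "(z - huber c z) \<bullet> (v - huber c z) = (1 - ?r) * (z \<bullet> v - c * norm z)"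
    using z by (simp add: h algebra_simps power2_norm_eq_inner[symmetric] power2_eq_square)
  also have "\<dots> \<le> 0"
  proof (rule mult_nonneg_nonpos)
    show "0 \<le> 1 - ?r" using z by simp
    have "z \<bullet> v \<le> norm z * norm v" by (rule norm_cauchy_schwarz)
    also have "\<dots> \<le> norm z * c" using assms z by (intro mult_left_mono) auto
    finally show "z \<bullet> v - c * norm z \<le> 0" by (simp add: mult.commute)
  qed
  finally show ?thesis .
qed

lemma huber_energy_ineq:
  fixes v z :: "real^'m"
  assumes "norm v \<le> c"
  shows "2 * (z \<bullet> (v - huber c z)) \<le> (norm v)\<^sup>2 - (norm (huber c z))\<^sup>2"
proof -
  let ?h = "huber c z"
  have "(norm v)\<^sup>2 - (norm ?h)\<^sup>2 - 2 * (z \<bullet> (v - ?h))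
        = (norm (v - ?h))\<^sup>2 - 2 * ((z - ?h) \<bullet> (v - ?h))"
    by (simp add: power2_norm_eq_inner inner_commute algebra_simps)
  moreover have "(z - ?h) \<bullet> (v - ?h) \<le> 0" using huber_projection_ineq[OF assms] .
  ultimately show ?thesis by (smt (verit) zero_le_power2)
qed

lemma inner_outer: "B \<bullet> outer v w = (B *v w) \<bullet> (v::real^'m)"
  by (simp add: outer_def inner_vec_def matrix_vector_mult_def sum_distrib_left sum_distrib_right mult_ac)

lemma trace_eq_inner_mat_1: "trace M = mat 1 \<bullet> (M::real^'m^'m)"
proof -
  have "mat 1 $ i \<bullet> M $ i = M $ i $ i" for i
    by (simp add: inner_vec_def mat_def if_distrib[of "\<lambda>x. x * _"] cong: if_cong)
  then show ?thesis by (simp add: trace_def inner_vec_def)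
qed

lemma trace_outer: "trace (outer v w) = v \<bullet> (w::real^'m)"
  by (simp add: trace_def outer_def inner_vec_def)

lemma norm_outer: "norm (outer v w) = norm v * norm (w::real^'m)"
proof -
  have "outer v w \<bullet> outer v w = (v \<bullet> v) * (w \<bullet> w)"
    by (simp add: outer_def inner_vec_def sum_product power2_eq_square algebra_simps)
  then show ?thesis
    by (simp add: norm_eq_sqrt_inner real_sqrt_mult)
qed

lemma mat_1_neq_0: "(mat 1 :: 'a::zero_neq_one^'n^'n) \<noteq> 0"
proof
  assume "(mat 1 :: 'a^'n^'n) = 0"
  then have "(mat 1 :: 'a^'n^'n) $ i $ i = 0" for i by simp
  then show False by (simp add: mat_def)
qed

lemma has_integral_inner_right:
  fixes f :: "'a::euclidean_space \<Rightarrow> 'b::euclidean_space"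
  assumes "f integrable_on S"
  shows "((\<lambda>s. b \<bullet> f s) has_integral b \<bullet> integral S f) S"
  using has_integral_linear[OF integrable_integral[OF assms] bounded_linear_inner_right]
  by (simp add: o_def)

lemma has_integral_trace:
  assumes "f integrable_on S"
  shows "((\<lambda>s. trace (f s :: real^'m^'m)) has_integral trace (integral S f)) S"
  using has_integral_inner_right[OF assms] by (simp add: trace_eq_inner_mat_1)

lemma has_integral_trace_outer_self:
  assumes "(\<lambda>s. outer (f s) (f s)) integrable_on S"
  shows "((\<lambda>s. (norm (f s :: real^'m))\<^sup>2) has_integral trace (integral S (\<lambda>s. outer (f s) (f s)))) S"
  using has_integral_trace[OF assms] by (simp add: trace_outer power2_norm_eq_inner)

lemma trace_integral_outer_self_nonneg:
  "0 \<le> trace (integral S (\<lambda>s. outer (f s) (f s :: real^'m)))"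
proof (cases "(\<lambda>s. outer (f s) (f s)) integrable_on S")
  case True
  then show ?thesis
    using has_integral_nonneg has_integral_trace_outer_self zero_le_power2 by blast
qed (simp add: not_integrable_integral trace_def)

lemma integrable_outer_self_if_bounded:
  fixes f :: "real \<Rightarrow> real^'m"
  assumes f: "f measurable_on {a..b}" and bounded: "\<forall>s\<in>{a..b}. norm (f s) \<le> c"
  shows "(\<lambda>s. outer (f s) (f s)) integrable_on {a..b}"
proof (rule measurable_bounded_by_integrable_imp_integrable)
  have "continuous_on UNIV (\<lambda>v::real^'m. outer v v)"
    unfolding outer_def by (intro continuous_on_vec_lambda continuous_intros)
  moreover have "outer 0 0 = (0::real^'m^'m)" by (simp add: outer_def vec_eq_iff)
  ultimately have "((\<lambda>v. outer v v) \<circ> f) measurable_on {a..b}"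
    by (rule measurable_on_compose_continuous_0[OF f])
  then show "(\<lambda>s. outer (f s) (f s)) \<in> borel_measurable (lebesgue_on {a..b})"
    by (simp add: measurable_on_iff_borel_measurable o_def)
  show "(\<lambda>s. c\<^sup>2) integrable_on {a..b}" by (rule integrable_on_const) simp
  show "norm (outer (f s) (f s)) \<le> c\<^sup>2" if "s \<in> {a..b}" for s
    using bounded that by (simp add: norm_outer power2_eq_square mult_mono')
qed simp

lemma huber_minimizes_trace_energy:
  fixes a f :: "real \<Rightarrow> real^'m" and A :: "real^'m^'m"
  assumes huber_eq: "integral S (\<lambda>s. outer (huber c (A *v a s)) (a s)) = mat 1"
    and f_eq: "integral S (\<lambda>s. outer (f s) (a s)) = mat 1"
    and f_sq: "(\<lambda>s. outer (f s) (f s)) integrable_on S"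
    and f_bounded: "\<forall>s\<in>S. norm (f s) \<le> c"
  shows "trace (integral S (\<lambda>s. outer (huber c (A *v a s)) (huber c (A *v a s))))
    \<le> trace (integral S (\<lambda>s. outer (f s) (f s)))"
proof -
  let ?z = "\<lambda>s. A *v a s"
  let ?g = "\<lambda>s. huber c (?z s)"
  have pairing: "((\<lambda>s. ?z s \<bullet> h s) has_integral A \<bullet> mat 1) S"
    if "integral S (\<lambda>s. outer (h s) (a s)) = mat 1" for h
  proof -
    have "(\<lambda>s. outer (h s) (a s)) integrable_on S"
      using that mat_1_neq_0 not_integrable_integral by metis
    from has_integral_inner_right[OF this, of A] show ?thesis
      by (simp add: that inner_outer)
  qed
  show ?thesis
  proof (cases "(\<lambda>s. outer (?g s) (?g s)) integrable_on S")
    case False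
    \<comment> \<open>the integral of a non-integrable function is 0, so the left side vanishes\<close>
    then have "trace (integral S (\<lambda>s. outer (?g s) (?g s))) = 0"
      by (simp add: not_integrable_integral trace_def)
    with trace_integral_outer_self_nonneg show ?thesis by metis
  next
    case True
    have "((\<lambda>s. 2 * (?z s \<bullet> (f s - ?g s))) has_integral 0) S"
      using has_integral_mult_right[OF has_integral_diff[OF pairing[OF f_eq] pairing[OF huber_eq]], of 2]
      by (simp add: inner_diff_right)
    moreover have "((\<lambda>s. (norm (f s))\<^sup>2 - (norm (?g s))\<^sup>2) has_integral
        trace (integral S (\<lambda>s. outer (f s) (f s))) - trace (integral S (\<lambda>s. outer (?g s) (?g s)))) S"
      by (intro has_integral_diff has_integral_trace_outer_self f_sq True)
    moreover have "2 * (?z s \<bullet> (f s - ?g s)) \<le> (norm (f s))\<^sup>2 - (norm (?g s))\<^sup>2" if "s \<in> S" for s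
      using huber_energy_ineq f_bounded that by blast
    ultimately have "0 \<le> trace (integral S (\<lambda>s. outer (f s) (f s))) - trace (integral S (\<lambda>s. outer (?g s) (?g s)))"
      by (rule has_integral_le)
    then show ?thesis by simp
  qed
qed

theorem theorem2p1:
  fixes t c L1 L2 k0 :: real
    and k :: "real \<Rightarrow> real"
    and AA :: "(real^'m) set"
    and a :: "real \<Rightarrow> (real \<Rightarrow> real) \<Rightarrow> real^'m \<Rightarrow> real"
    and adot :: "real \<Rightarrow> (real \<Rightarrow> real) \<Rightarrow> real^'m \<Rightarrow> real^'m"
    and Y0 :: "real^'m \<Rightarrow> real \<Rightarrow> real"
    and alpha :: "real^'m"
    and Astar :: "real^'m^'m"
  assumes t_pos: "t > 0"
    and AA_open: "open AA"
    and k_mono: "mono k" and k_rcont: "\<forall>u. continuous (at_right u) k"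
    and k_bnd: "\<forall>u. 0 \<le> k u \<and> k u \<le> k0"
    and a_nonant: "nonanticipative t a"
    and a_lip: "\<forall>\<beta>\<in>AA. \<forall>s\<in>{0..t}. \<forall>x1 x2. continuous_on {0..t} x1 \<longrightarrow> continuous_on {0..t} x2 \<longrightarrow>
        \<bar>a s x1 \<beta> - a s x2 \<beta>\<bar> \<le> L1 * (LINT u:{0..s}|interval_measure k. \<bar>x1 u - x2 u\<bar>) + L2 * \<bar>x1 s - x2 s\<bar>"
    and a_growth: "\<forall>\<beta>\<in>AA. \<forall>s\<in>{0..t}. \<forall>x. continuous_on {0..t} x \<longrightarrow>
        \<bar>a s x \<beta>\<bar> \<le> L1 * (LINT u:{0..s}|interval_measure k. 1 + \<bar>x u\<bar>) + L2 * (1 + \<bar>x s\<bar>)"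
    and a_diff: "\<forall>\<beta>\<in>AA. \<forall>s\<in>{0..t}. \<forall>x. continuous_on {0..t} x \<longrightarrow>
        ((\<lambda>\<gamma>. a s x \<gamma>) has_derivative (\<lambda>h. adot s x \<beta> \<bullet> h)) (at \<beta>)"
    and Y0_cont: "\<forall>\<beta>\<in>AA. continuous_on {0..t} (Y0 \<beta>)"
    and Y0_ode: "\<forall>\<beta>\<in>AA. \<forall>s\<in>{0..t}. Y0 \<beta> s = integral {0..s} (\<lambda>u. a u (Y0 \<beta>) \<beta>)"
    and adot_nonant: "nonanticipative t adot"
    and adot_sq: "\<forall>\<beta>\<in>AA. sq_integrable_on (\<lambda>s. adot s (Y0 \<beta>) \<beta>) t"
    and adot_rank: "\<forall>\<beta>\<in>AA. rank (Gamma0 t adot (Y0 \<beta>) \<beta>) = CARD('m)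
        \<and> rank (gamma0 t adot adot (Y0 \<beta>) \<beta>) = CARD('m)"
    and alpha_in: "alpha \<in> AA"
    and c_pos: "c > 0"
    and Astar_inv: "invertible Astar"
    and Astar_eq: "integral {0..t} (\<lambda>s. outer (huber c (Astar *v adot s (Y0 alpha) alpha))
        (adot s (Y0 alpha) alpha)) = mat 1"
  shows "gamma0 t (\<lambda>s x \<beta>. huber c (Astar *v adot s x \<beta>)) adot (Y0 alpha) alpha = mat 1
    \<and> (\<forall>s\<in>{0..t}. norm (huber c (Astar *v adot s (Y0 alpha) alpha)) \<le> c)
    \<and> (\<forall>psi :: real \<Rightarrow> (real \<Rightarrow> real) \<Rightarrow> real^'m \<Rightarrow> real^'m.
         nonanticipative t psi
         \<and> sq_integrable_on (\<lambda>s. psi s (Y0 alpha) alpha) t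
         \<and> rank (Gamma0 t psi (Y0 alpha) alpha) = CARD('m)
         \<and> rank (gamma0 t psi adot (Y0 alpha) alpha) = CARD('m)
         \<and> gamma0 t psi adot (Y0 alpha) alpha = mat 1
         \<and> (\<forall>s\<in>{0..t}. norm (psi s (Y0 alpha) alpha) \<le> c)
         \<longrightarrow> trace (Gamma0 t (\<lambda>s x \<beta>. huber c (Astar *v adot s x \<beta>)) (Y0 alpha) alpha)
             \<le> trace (Gamma0 t psi (Y0 alpha) alpha))"
proof -
  let ?a = "\<lambda>s. adot s (Y0 alpha) alpha"
  have "gamma0 t (\<lambda>s x \<beta>. huber c (Astar *v adot s x \<beta>)) adot (Y0 alpha) alpha = mat 1"
    using Astar_eq by (simp add: gamma0_def)
  moreover have "\<forall>s\<in>{0..t}. norm (huber c (Astar *v ?a s)) \<le> c"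
    using huber_norm_le[OF less_imp_le[OF c_pos]] by blast
  moreover have "trace (Gamma0 t (\<lambda>s x \<beta>. huber c (Astar *v adot s x \<beta>)) (Y0 alpha) alpha)
      \<le> trace (Gamma0 t psi (Y0 alpha) alpha)"
    if psi_sq: "sq_integrable_on (\<lambda>s. psi s (Y0 alpha) alpha) t"
      and psi_eq: "gamma0 t psi adot (Y0 alpha) alpha = mat 1"
      and psi_bounded: "\<forall>s\<in>{0..t}. norm (psi s (Y0 alpha) alpha) \<le> c"
    for psi :: "real \<Rightarrow> (real \<Rightarrow> real) \<Rightarrow> real^'m \<Rightarrow> real^'m"
  proof -
    have "(\<lambda>s. outer (psi s (Y0 alpha) alpha) (psi s (Y0 alpha) alpha)) integrable_on {0..t}"
      using psi_sq integrable_outer_self_if_bounded[OF _ psi_bounded]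
      unfolding sq_integrable_on_def by blast
    from huber_minimizes_trace_energy[OF Astar_eq _ this psi_bounded] psi_eq
    show ?thesis by (simp add: Gamma0_def gamma0_def)
  qed
  ultimately show ?thesis by blast
qed

end
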